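(* Let $M$ nodes with capacities $C_1,\dots,C_M>0$ and $N$ classes with fixed loop-free routes be given as in the context, with external rates $r_n>0$ and mean loads $\rho_n>0$. For every $J\in\mathbb{Z}_+^N$, the system of equations \[ r^{n,J}_m=\begin{cases}0 & n\notin\mathcal{N}_m\\ r_n & p^n(m)=0\\ r^{n,J}_{p^n(m)}S^J_{p^n(m)} & \text{otherwise},\end{cases}\qquad \rho^{n,J}_m=\begin{cases}0 & n\notin\mathcal{N}_m\\ \rho_n & p^n(m)=0\\ \rho^{n,J}_{p^n(m)}S^J_{p^n(m)} & \text{otherwise},\end{cases} \] with \[ S^J_m=\frac{C_m}{\max\{C_m,\ \sum_{n\in\mathcal{N}_m}(J_n r^{n,J}_m+\rho^{n,J}_m)\}}, \] has a unique solution $(r^{n,J}_m,\rho^{n,J}_m)_{n,m}$. Furthermore, for fixed $J$, $r^{n,J}_m$ and $\rho^{n,J}_m$ are continuous functions of the parameters $(r_n)_n$ and $(\rho_n)_n$.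
   Context: Class $n\in\{1,\dots,N\}$ follows a fixed route $\pi^n=[\pi^n_1,\dots,\pi^n_{l_n}]$ of pairwise distinct nodes in $\{1,\dots,M\}$ (loop-free route). $\mathcal{N}_m=\{n:\pi^n_i=m\text{ for some }i\}$ is the set of classes passing through node $m$. For $n\in\mathcal{N}_m$, $p^n(m)=\pi^n_{i-1}$ if $m=\pi^n_i$ with $i\ge2$, and $p^n(m)=0$ if $m=\pi^n_1$. The network as a whole need not be feedforward. *)

theory Defs
  imports "HOL-Analysis.Analysis"
begin

text \<open>Nodes are 1..M, classes are 1..N.
  Solutions are pairs (R, P) of functions class => node => real, where
  R n m stands for r^{n,J}_m and P n m for rho^{n,J}_m.\<close>

definition classes_at :: "nat \<Rightarrow> (nat \<Rightarrow> nat list) \<Rightarrow> nat \<Rightarrow> nat set" where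
  "classes_at N route m = {n \<in> {1..N}. m \<in> set (route n)}"

definition pred_node :: "(nat \<Rightarrow> nat list) \<Rightarrow> nat \<Rightarrow> nat \<Rightarrow> nat" where
  "pred_node route n m =
     (let i = (LEAST i. i < length (route n) \<and> route n ! i = m)
      in if i = 0 then 0 else route n ! (i - 1))"

definition S_fac :: "nat \<Rightarrow> (nat \<Rightarrow> nat list) \<Rightarrow> (nat \<Rightarrow> real) \<Rightarrow> (nat \<Rightarrow> nat)
     \<Rightarrow> (nat \<Rightarrow> nat \<Rightarrow> real) \<Rightarrow> (nat \<Rightarrow> nat \<Rightarrow> real) \<Rightarrow> nat \<Rightarrow> real" where
  "S_fac N route C J R P m =
     C m / max (C m) (\<Sum>n\<in>classes_at N route m. real (J n) * R n m + P n m)"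

text \<open>The fixed-point system; values outside the index range are fixed to 0
  so that the solution is a well-defined object.\<close>
definition is_solution :: "nat \<Rightarrow> nat \<Rightarrow> (nat \<Rightarrow> nat list) \<Rightarrow> (nat \<Rightarrow> real)
     \<Rightarrow> (nat \<Rightarrow> real) \<Rightarrow> (nat \<Rightarrow> real) \<Rightarrow> (nat \<Rightarrow> nat)
     \<Rightarrow> (nat \<Rightarrow> nat \<Rightarrow> real) \<times> (nat \<Rightarrow> nat \<Rightarrow> real) \<Rightarrow> bool" where
  "is_solution M N route C r \<rho> J sol \<longleftrightarrow>
     (let R = fst sol; P = snd sol; S = S_fac N route C J R P in
      (\<forall>n m. (n \<notin> {1..N} \<or> m \<notin> {1..M}) \<longrightarrow> R n m = 0 \<and> P n m = 0) \<and>
      (\<forall>n\<in>{1..N}. \<forall>m\<in>{1..M}.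
         R n m = (if n \<notin> classes_at N route m then 0
                  else if pred_node route n m = 0 then r n
                  else R n (pred_node route n m) * S (pred_node route n m)) \<and>
         P n m = (if n \<notin> classes_at N route m then 0
                  else if pred_node route n m = 0 then \<rho> n
                  else P n (pred_node route n m) * S (pred_node route n m))))"

end

theory Submission
  imports Defs
begin

text \<open>
  Given the node factors \<open>S\<close>, the recursion forces \<open>r\<^sup>n\<^sub>m = r\<^sub>n \<Prod> S\<^sub>j\<close> and
  \<open>\<rho>\<^sup>n\<^sub>m = \<rho>\<^sub>n \<Prod> S\<^sub>j\<close>, the products running over the nodes before \<open>m\<close> on the
  route of \<open>n\<close>; so the system is equivalent to a fixed-point equation
  \<open>S\<^sub>m = C\<^sub>m / max C\<^sub>m (\<Sum>\<^sub>n a\<^sub>n \<Prod> S\<^sub>j)\<close> for the factors alone, with class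
  weights \<open>a\<^sub>n = J\<^sub>n r\<^sub>n + \<rho>\<^sub>n\<close>.

  Uniqueness and continuity rest on an entropy estimate. Let
  \<open>H x = x - 1 - ln x \<ge> 0\<close> (\<open>ln_defect\<close> below) and compare two fixed
  points \<open>S\<close>, \<open>T\<close> for weights \<open>a\<close>, \<open>b\<close>. An exact identity for one node,
  telescoped along each route, bounds \<open>\<Sum> (weight) H(T\<^sub>m/S\<^sub>m)\<close> by
  \<open>\<Sum>\<^sub>n b\<^sub>n H(a\<^sub>n/b\<^sub>n)\<close> plus the terms \<open>ln(S\<^sub>m/T\<^sub>m)(S\<^sub>m L\<^sub>m(S) - T\<^sub>m L\<^sub>m(T))\<close>
  summed over the nodes; these are \<open>\<le> 0\<close>, because the node with the smaller
  factor is saturated (\<open>S\<^sub>m L\<^sub>m = C\<^sub>m\<close>) while the other carries at most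
  \<open>C\<^sub>m\<close>. For \<open>a = b\<close> the bound is \<open>0\<close>, and it tends to \<open>0\<close> as \<open>a \<rightarrow> b\<close>.

  Existence is proved for the variant in which the factors outside a node
  set \<open>A\<close> are pinned to given values, by induction on \<open>A\<close>: to add a node,
  pin it to \<open>t\<close>, solve for the others, and choose \<open>t\<close> by the intermediate
  value theorem, using the continuity just described.
\<close>

section \<open>The defect of \<open>ln x \<le> x - 1\<close>\<close>

definition ln_defect :: "real \<Rightarrow> real" where
  "ln_defect x = x - 1 - ln x"

lemma ln_defect_1 [simp]: "ln_defect 1 = 0"
  by (simp add: ln_defect_def)

lemma ln_defect_nonneg: "x > 0 \<Longrightarrow> ln_defect x \<ge> 0"
  using ln_le_minus_one[of x] by (simp add: ln_defect_def)

lemma ln_defect_pos: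
  assumes "x > 0" "x \<noteq> 1"
  shows "ln_defect x > 0"
proof -
  have "ln x \<noteq> x - 1"
    using ln_eq_minus_one[of x] assms by auto
  then show ?thesis
    using ln_le_minus_one[of x] assms by (simp add: ln_defect_def)
qed

lemma ln_defect_antimono:
  assumes "0 < p" "p \<le> q" "q \<le> 1"
  shows "ln_defect q \<le> ln_defect p"
proof -
  have "ln (p / q) \<le> p / q - 1"
    using ln_le_minus_one[of "p / q"] assms by simp
  then have "(q - p) / q \<le> ln q - ln p"
    using assms by (simp add: ln_div diff_divide_distrib)
  moreover have "q - p \<le> (q - p) / q"
    using assms by (simp add: le_divide_eq mult_left_le)
  ultimately show ?thesis
    unfolding ln_defect_def by linarith
qed

lemma ln_defect_mono:
  assumes "1 \<le> p" "p \<le> q"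
  shows "ln_defect p \<le> ln_defect q"
proof -
  have "ln (q / p) \<le> q / p - 1"
    using ln_le_minus_one[of "q / p"] assms by simp
  then have "ln q - ln p \<le> (q - p) / p"
    using assms by (simp add: ln_div diff_divide_distrib)
  moreover have "(q - p) * 1 \<le> (q - p) * p"
    using assms by (intro mult_left_mono) auto
  then have "(q - p) / p \<le> q - p"
    using assms by (simp add: divide_le_eq)
  ultimately show ?thesis
    unfolding ln_defect_def by linarith
qed

lemma tendsto_1_if_ln_defect_tendsto_0:
  assumes lim: "((\<lambda>x. ln_defect (q x)) \<longlongrightarrow> 0) F" and pos: "eventually (\<lambda>x. q x > 0) F"
  shows "(q \<longlongrightarrow> 1) F"
proof (rule tendstoI)
  fix e :: real assume "e > 0"
  define e' where "e' = min e (1/2)"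
  have e': "0 < e'" "e' \<le> e" "e' \<le> 1/2"
    using \<open>e > 0\<close> by (auto simp: e'_def)
  define d where "d = min (ln_defect (1 - e')) (ln_defect (1 + e'))"
  have "d > 0"
    unfolding d_def using e' by (auto intro!: ln_defect_pos)
  with lim have "eventually (\<lambda>x. ln_defect (q x) < d) F"
    by (rule order_tendstoD)
  then show "eventually (\<lambda>x. dist (q x) 1 < e) F"
    using pos
  proof eventually_elim
    case (elim x)
    have "\<not> q x \<le> 1 - e'"
      using ln_defect_antimono[of "q x" "1 - e'"] elim e' unfolding d_def by auto
    moreover have "\<not> q x \<ge> 1 + e'"
      using ln_defect_mono[of "1 + e'" "q x"] elim e' unfolding d_def by auto
    ultimately show ?case
      using e' by (simp add: dist_real_def abs_less_iff)
  qed
qed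

text \<open>Passing one node of a route multiplies \<open>A\<close>, \<open>B\<close> by the factors \<open>s\<close>, \<open>t\<close>
  of that node; this identity makes the estimate telescope.\<close>

lemma ln_defect_step_identity:
  fixes A B s t :: real
  assumes "A > 0" "B > 0" "s > 0" "t > 0"
  shows "ln (s / t) * (A * s - B * t) + B * t * ln_defect (A / B)
       = A * s * ln_defect (t / s) + B * t * ln_defect (A * s / (B * t))"
proof -
  have "ln (A * s / (B * t)) = ln (A / B) + ln (s / t)" "ln (t / s) = - ln (s / t)"
    using assms by (simp_all add: ln_div ln_mult)
  moreover have "A * s * (t / s) = A * t" "B * t * (A * s / (B * t)) = A * s"
    "B * t * (A / B) = A * t"
    using assms by simp_all
  ultimately show ?thesis
    unfolding ln_defect_def by (simp add: algebra_simps)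
qed

section \<open>Products along a route\<close>

definition nodes_before :: "'a list \<Rightarrow> 'a \<Rightarrow> 'a set" where
  "nodes_before xs m = set (takeWhile (\<lambda>x. x \<noteq> m) xs)"

definition prod_before :: "('a \<Rightarrow> 'b::comm_monoid_mult) \<Rightarrow> 'a list \<Rightarrow> 'a \<Rightarrow> 'b" where
  "prod_before S xs m = (\<Prod>j\<in>nodes_before xs m. S j)"

lemma finite_nodes_before [simp]: "finite (nodes_before xs m)"
  by (simp add: nodes_before_def)

lemma nodes_before_subset: "nodes_before xs m \<subseteq> set xs"
  by (auto simp: nodes_before_def dest: set_takeWhileD)

lemma prod_before_Cons_self [simp]: "prod_before S (x # xs) x = 1"
  by (simp add: prod_before_def nodes_before_def)

lemma prod_before_Cons:
  assumes "m \<noteq> x" "x \<notin> set xs"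
  shows "prod_before S (x # xs) m = S x * prod_before S xs m"
proof -
  have "x \<notin> nodes_before xs m"
    using nodes_before_subset[of xs m] assms(2) by blast
  then show ?thesis
    using assms(1) by (simp add: prod_before_def nodes_before_def)
qed

lemma nodes_before_nth:
  assumes "distinct xs" "i < length xs"
  shows "nodes_before xs (xs ! i) = set (take i xs)"
proof -
  have "takeWhile (\<lambda>x. x \<noteq> xs ! i) xs = take i xs"
    using assms
  proof (induction xs arbitrary: i)
    case (Cons x xs)
    then show ?case
      by (cases i) (auto simp: nth_mem)
  qed simp
  then show ?thesis
    by (simp add: nodes_before_def)
qed

lemma prod_before_nth_0: "distinct xs \<Longrightarrow> xs \<noteq> [] \<Longrightarrow> prod_before S xs (xs ! 0) = 1"
  using nodes_before_nth[of xs 0] by (simp add: prod_before_def)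

lemma prod_before_nth_Suc:
  assumes "distinct xs" "Suc i < length xs"
  shows "prod_before S xs (xs ! Suc i) = prod_before S xs (xs ! i) * S (xs ! i)"
proof -
  have "set (take (Suc i) xs) = insert (xs ! i) (set (take i xs))"
    using assms by (simp add: take_Suc_conv_app_nth)
  moreover have "xs ! i \<notin> set (take i xs)"
    using assms by (simp add: in_set_conv_nth nth_eq_iff_index_eq)
  ultimately show ?thesis
    using assms by (simp add: prod_before_def nodes_before_nth mult.commute)
qed

lemma route_entropy_inequality:
  fixes S T :: "'a \<Rightarrow> real"
  assumes "distinct xs" "\<forall>j\<in>set xs. S j > 0 \<and> T j > 0 \<and> T j \<le> 1"
    and "A > 0" "B > 0"
  shows "(\<Sum>m\<in>set xs. A * prod_before S xs m * S m * ln_defect (T m / S m))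
     \<le> (\<Sum>m\<in>set xs. ln (S m / T m) * (A * prod_before S xs m * S m - B * prod_before T xs m * T m))
        + B * ln_defect (A / B)"
  using assms
proof (induction xs arbitrary: A B)
  case Nil
  then show ?case
    using ln_defect_nonneg[of "A / B"] by simp
next
  case (Cons x xs)
  have x: "S x > 0" "T x > 0" "T x \<le> 1" and x_notin: "x \<notin> set xs"
    using Cons.prems by auto
  have shift: "prod_before U (x # xs) m = U x * prod_before U xs m" if "m \<in> set xs" for U :: "'a \<Rightarrow> real" and m
    using that x_notin by (intro prod_before_Cons) auto
  have IH: "(\<Sum>m\<in>set xs. (A * S x) * prod_before S xs m * S m * ln_defect (T m / S m))
     \<le> (\<Sum>m\<in>set xs. ln (S m / T m) * ((A * S x) * prod_before S xs m * S m
          - (B * T x) * prod_before T xs m * T m))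
        + (B * T x) * ln_defect ((A * S x) / (B * T x))"
    using Cons.IH[of "A * S x" "B * T x"] Cons.prems x by auto
  have step: "ln (S x / T x) * (A * S x - B * T x) + B * T x * ln_defect (A / B)
      = A * S x * ln_defect (T x / S x) + B * T x * ln_defect ((A * S x) / (B * T x))"
    using ln_defect_step_identity Cons.prems x by simp
  have "B * T x * ln_defect (A / B) \<le> B * ln_defect (A / B)"
    using mult_right_mono[OF mult_left_le[of "T x" B] ln_defect_nonneg[of "A / B"]] Cons.prems x
    by simp
  then show ?case
    using IH step x_notin by (simp add: shift sum.cong[OF refl shift] algebra_simps)
qed

lemma pred_node_nth:
  assumes "distinct (route n)" "i < length (route n)"
  shows "pred_node route n (route n ! i) = (if i = 0 then 0 else route n ! (i - 1))"
proof -
  have "(LEAST j. j < length (route n) \<and> route n ! j = route n ! i) = i"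
    using assms by (intro Least_equality) (auto simp: nth_eq_iff_index_eq)
  then show ?thesis
    unfolding pred_node_def Let_def by simp
qed

section \<open>Factor fixed points with pinned nodes\<close>

lemma div_max_bounds: "(c::real) > 0 \<Longrightarrow> 0 < c / max c L \<and> c / max c L \<le> 1"
  by (auto simp: max_def)

lemma div_max_times_le: "(c::real) > 0 \<Longrightarrow> L \<ge> 0 \<Longrightarrow> c / max c L * L \<le> c"
  by (cases "L \<le> c") (auto simp: max_def)

lemma div_max_antimono: "(c::real) > 0 \<Longrightarrow> l \<le> L \<Longrightarrow> c / max c L \<le> c / max c l"
  by (intro divide_left_mono) (auto simp: max_def)

lemma tendsto_apply: "(f \<longlongrightarrow> l) F \<Longrightarrow> ((\<lambda>x. f x i) \<longlongrightarrow> l i) F"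
  using continuous_on_tendsto_compose[OF continuous_on_product_coordinates, of f l F] by simp

locale network =
  fixes M N :: nat and route :: "nat \<Rightarrow> nat list" and C :: "nat \<Rightarrow> real"
  assumes C_pos: "\<forall>m\<in>{1..M}. C m > 0"
    and routes: "\<forall>n\<in>{1..N}. route n \<noteq> [] \<and> distinct (route n) \<and> set (route n) \<subseteq> {1..M}"
begin

definition load :: "(nat \<Rightarrow> real) \<Rightarrow> (nat \<Rightarrow> real) \<Rightarrow> nat \<Rightarrow> real" where
  "load a S m = (\<Sum>n\<in>classes_at N route m. a n * prod_before S (route n) m)"

definition capacity_factor :: "(nat \<Rightarrow> real) \<Rightarrow> (nat \<Rightarrow> real) \<Rightarrow> nat \<Rightarrow> real" where
  "capacity_factor a S m = C m / max (C m) (load a S m)"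

text \<open>\<open>S\<close> solves the factor equation at the nodes of \<open>A\<close> and equals \<open>\<sigma>\<close> at the
  other nodes; the actual system is the case \<open>A = {1..M}\<close>.\<close>

definition pinned_solution :: "nat set \<Rightarrow> (nat \<Rightarrow> real) \<Rightarrow> (nat \<Rightarrow> real) \<Rightarrow> (nat \<Rightarrow> real) \<Rightarrow> bool" where
  "pinned_solution A a \<sigma> S \<longleftrightarrow> (\<forall>m\<in>{1..M}. S m = (if m \<in> A then capacity_factor a S m else \<sigma> m))"

definition admissible :: "nat set \<Rightarrow> (nat \<Rightarrow> real) \<Rightarrow> (nat \<Rightarrow> real) \<Rightarrow> bool" where
  "admissible A a \<sigma> \<longleftrightarrow> (\<forall>n\<in>{1..N}. a n > 0) \<and> (\<forall>m\<in>{1..M} - A. 0 < \<sigma> m \<and> \<sigma> m \<le> 1)"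

lemma admissible_weight_pos: "admissible A a \<sigma> \<Longrightarrow> n \<in> {1..N} \<Longrightarrow> a n > 0"
  unfolding admissible_def by blast

lemma admissible_pin_bounds: "admissible A a \<sigma> \<Longrightarrow> j \<in> {1..M} - A \<Longrightarrow> 0 < \<sigma> j \<and> \<sigma> j \<le> 1"
  unfolding admissible_def by blast

lemma classes_at_subset: "classes_at N route m \<subseteq> {1..N}"
  by (auto simp: classes_at_def)

lemma finite_classes_at [simp]: "finite (classes_at N route m)"
  using classes_at_subset by (rule finite_subset) simp

lemma route_subset: "n \<in> {1..N} \<Longrightarrow> set (route n) \<subseteq> {1..M}"
  using routes by blast

lemma distinct_route: "n \<in> {1..N} \<Longrightarrow> distinct (route n)"
  using routes by blast

lemma nodes_before_route_subset: "n \<in> {1..N} \<Longrightarrow> nodes_before (route n) m \<subseteq> {1..M}"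
  using route_subset[of n] nodes_before_subset[of "route n" m] by blast

lemma prod_before_route_bounds:
  fixes S :: "nat \<Rightarrow> real"
  assumes "n \<in> {1..N}" "\<forall>j\<in>{1..M}. 0 < S j \<and> S j \<le> 1"
  shows "0 < prod_before S (route n) m \<and> prod_before S (route n) m \<le> 1"
proof -
  have pos: "0 < S j" and le: "S j \<le> 1" if "j \<in> nodes_before (route n) m" for j
    using assms nodes_before_route_subset[OF assms(1)] that by auto
  have "0 < (\<Prod>j\<in>nodes_before (route n) m. S j)"
    using pos by (rule prod_pos)
  moreover have "(\<Prod>j\<in>nodes_before (route n) m. S j) \<le> 1"
    using pos le by (intro prod_le_1) (simp add: less_imp_le)
  ultimately show ?thesis
    by (simp add: prod_before_def)
qed

lemma load_bounds:
  assumes "\<forall>n\<in>{1..N}. a n \<ge> 0" "\<forall>j\<in>{1..M}. 0 < S j \<and> S j \<le> 1"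
  shows "0 \<le> load a S m \<and> load a S m \<le> (\<Sum>n\<in>{1..N}. a n)"
proof
  show "0 \<le> load a S m"
    unfolding load_def
  proof (rule sum_nonneg)
    fix n assume "n \<in> classes_at N route m"
    then have "n \<in> {1..N}"
      using classes_at_subset by blast
    then show "0 \<le> a n * prod_before S (route n) m"
      using prod_before_route_bounds[OF _ assms(2), of n m] assms(1) by simp
  qed
  have "load a S m \<le> (\<Sum>n\<in>classes_at N route m. a n)"
    unfolding load_def
  proof (rule sum_mono)
    fix n assume "n \<in> classes_at N route m"
    then have "n \<in> {1..N}"
      using classes_at_subset by blast
    then show "a n * prod_before S (route n) m \<le> a n"
      using prod_before_route_bounds[OF _ assms(2), of n m] assms(1) by (simp add: mult_left_le)
  qed
  also have "\<dots> \<le> (\<Sum>n\<in>{1..N}. a n)"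
    using classes_at_subset assms(1) by (intro sum_mono2) auto
  finally show "load a S m \<le> (\<Sum>n\<in>{1..N}. a n)" .
qed

lemma capacity_factor_bounds:
  assumes "m \<in> {1..M}"
  shows "0 < capacity_factor a S m \<and> capacity_factor a S m \<le> 1"
  using C_pos assms div_max_bounds unfolding capacity_factor_def by blast

lemma capacity_factor_times_load_le:
  assumes "m \<in> {1..M}" "load a S m \<ge> 0"
  shows "capacity_factor a S m * load a S m \<le> C m"
  using C_pos assms div_max_times_le unfolding capacity_factor_def by blast

lemma capacity_factor_mono:
  assumes "m \<in> {1..M}" "load a S m \<le> L"
  shows "C m / max (C m) L \<le> capacity_factor a S m"
  using C_pos assms div_max_antimono unfolding capacity_factor_def by blast

lemma capacity_factor_tendsto:
  assumes "\<forall>j\<in>{1..M}. ((\<lambda>x. S x j) \<longlongrightarrow> T j) F" "k \<in> {1..M}"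
  shows "((\<lambda>x. capacity_factor a (S x) k) \<longlongrightarrow> capacity_factor a T k) F"
proof -
  have "((\<lambda>x. load a (S x) k) \<longlongrightarrow> load a T k) F"
    unfolding load_def prod_before_def
  proof (intro tendsto_sum tendsto_mult tendsto_const tendsto_prod)
    fix n j assume "n \<in> classes_at N route k" "j \<in> nodes_before (route n) k"
    then show "((\<lambda>x. S x j) \<longlongrightarrow> T j) F"
      using assms(1) classes_at_subset nodes_before_route_subset by blast
  qed
  moreover have "C k > 0"
    using C_pos assms(2) by blast
  ultimately show ?thesis
    unfolding capacity_factor_def
    by (intro tendsto_divide tendsto_const tendsto_max) (auto simp: max_def)
qed

lemma pinned_solution_bounds:
  assumes "pinned_solution A a \<sigma> S" "admissible A a \<sigma>"
  shows "\<forall>m\<in>{1..M}. 0 < S m \<and> S m \<le> 1"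
  using assms capacity_factor_bounds unfolding pinned_solution_def admissible_def by (metis Diff_iff)

lemma pinned_solution_no_classes:
  assumes "pinned_solution A a \<sigma> S" "m \<in> {1..M}" "classes_at N route m = {}"
  shows "S m = (if m \<in> A then 1 else \<sigma> m)"
proof -
  have "C m > 0"
    using C_pos assms(2) by blast
  then show ?thesis
    using assms unfolding pinned_solution_def capacity_factor_def load_def by auto
qed

lemma pinned_load_bounds:
  assumes "pinned_solution A a \<sigma> S" "admissible A a \<sigma>"
  shows "0 \<le> load a S m \<and> load a S m \<le> (\<Sum>n\<in>{1..N}. a n)"
proof -
  have "\<forall>n\<in>{1..N}. a n \<ge> 0"
    using assms(2) by (auto simp: admissible_def less_imp_le)
  then show ?thesis
    using load_bounds pinned_solution_bounds[OF assms] by blast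
qed

lemma factor_load_bounds:
  assumes "pinned_solution A a \<sigma> S" "admissible A a \<sigma>" "m \<in> {1..M}"
  shows "0 \<le> S m * load a S m \<and> S m * load a S m \<le> (\<Sum>n\<in>{1..N}. a n)"
proof -
  have "0 < S m" "S m \<le> 1"
    using pinned_solution_bounds[OF assms(1,2)] assms(3) by auto
  then show ?thesis
    using pinned_load_bounds[OF assms(1,2), of m] mult_left_le_one_le[of "load a S m" "S m"] by auto
qed

lemma saturated_node_sign:
  assumes S: "pinned_solution A a \<sigma> S" "admissible A a \<sigma>"
    and T: "pinned_solution A b \<tau> T" "admissible A b \<tau>"
    and m: "m \<in> A" "A \<subseteq> {1..M}"
  shows "ln (S m / T m) * (S m * load a S m - T m * load b T m) \<le> 0"
proof -
  have m_node: "m \<in> {1..M}" and C: "C m > 0"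
    using m C_pos by auto
  have S_m: "S m = capacity_factor a S m" and T_m: "T m = capacity_factor b T m"
    using S(1) T(1) m m_node unfolding pinned_solution_def by auto
  have "0 \<le> load a S m" "0 \<le> load b T m"
    using pinned_load_bounds[OF S] pinned_load_bounds[OF T] by auto
  then have SL: "S m * load a S m \<le> C m" and TL: "T m * load b T m \<le> C m"
    using capacity_factor_times_load_le[OF m_node] S_m T_m by auto
  have S_bounds: "0 < S m" "S m \<le> 1" and T_bounds: "0 < T m" "T m \<le> 1"
    using pinned_solution_bounds[OF S] pinned_solution_bounds[OF T] m_node by auto
  consider "S m > T m" | "S m < T m" | "S m = T m"
    by linarith
  then show ?thesis
  proof cases
    case 1
    then have "T m < 1"
      using S_bounds by linarith
    then have "load b T m > C m"
      using T_m C by (auto simp: capacity_factor_def max_def split: if_splits)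
    then have "T m * load b T m = C m"
      using T_m C by (simp add: capacity_factor_def max_def)
    moreover have "ln (S m / T m) > 0"
      using 1 T_bounds by simp
    ultimately show ?thesis
      using SL by (simp add: mult_le_0_iff)
  next
    case 2
    then have "S m < 1"
      using T_bounds by linarith
    then have "load a S m > C m"
      using S_m C by (auto simp: capacity_factor_def max_def split: if_splits)
    then have "S m * load a S m = C m"
      using S_m C by (simp add: capacity_factor_def max_def)
    moreover have "ln (S m / T m) < 0"
      using 2 S_bounds T_bounds by simp
    ultimately show ?thesis
      using TL by (simp add: mult_le_0_iff)
  qed (use T_bounds in simp)
qed

lemma sum_routes_swap:
  "(\<Sum>n\<in>{1..N}. \<Sum>m\<in>set (route n). f n m) = (\<Sum>m\<in>{1..M}. \<Sum>n\<in>classes_at N route m. f n m)"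
proof -
  have "(\<Sum>n\<in>{1..N}. \<Sum>m\<in>set (route n). f n m)
      = (\<Sum>n\<in>{1..N}. \<Sum>m\<in>{m. m \<in> {1..M} \<and> m \<in> set (route n)}. f n m)"
  proof (rule sum.cong[OF refl])
    fix n assume "n \<in> {1..N}"
    then have "{m. m \<in> {1..M} \<and> m \<in> set (route n)} = set (route n)"
      using route_subset by blast
    then show "(\<Sum>m\<in>set (route n). f n m) = (\<Sum>m\<in>{m. m \<in> {1..M} \<and> m \<in> set (route n)}. f n m)"
      by simp
  qed
  also have "\<dots> = (\<Sum>m\<in>{1..M}. \<Sum>n\<in>{n. n \<in> {1..N} \<and> m \<in> set (route n)}. f n m)"
    by (rule sum.swap_restrict) auto
  also have "\<dots> = (\<Sum>m\<in>{1..M}. \<Sum>n\<in>classes_at N route m. f n m)"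
    by (simp add: classes_at_def)
  finally show ?thesis .
qed

text \<open>Only the pinned nodes remain on the right: at the other nodes the
  contributions are \<open>\<le> 0\<close> by the saturation argument.\<close>

lemma entropy_estimate:
  assumes S: "pinned_solution A a \<sigma> S" "admissible A a \<sigma>"
    and T: "pinned_solution A b \<tau> T" "admissible A b \<tau>"
    and A: "A \<subseteq> {1..M}"
  shows "(\<Sum>n\<in>{1..N}. \<Sum>m\<in>set (route n). a n * prod_before S (route n) m * S m * ln_defect (T m / S m))
     \<le> (\<Sum>n\<in>{1..N}. b n * ln_defect (a n / b n))
       + (\<Sum>m\<in>{1..M} - A. ln (S m / T m) * (S m * load a S m - T m * load b T m))"
proof -
  have S_bounds: "\<forall>j\<in>{1..M}. 0 < S j \<and> S j \<le> 1" and T_bounds: "\<forall>j\<in>{1..M}. 0 < T j \<and> T j \<le> 1"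
    using pinned_solution_bounds S T by blast+
  have a_pos: "\<forall>n\<in>{1..N}. a n > 0" and b_pos: "\<forall>n\<in>{1..N}. b n > 0"
    using S(2) T(2) unfolding admissible_def by auto
  define g where "g m = ln (S m / T m) * (S m * load a S m - T m * load b T m)" for m
  have "(\<Sum>n\<in>{1..N}. \<Sum>m\<in>set (route n). a n * prod_before S (route n) m * S m * ln_defect (T m / S m))
     \<le> (\<Sum>n\<in>{1..N}. (\<Sum>m\<in>set (route n). ln (S m / T m)
            * (a n * prod_before S (route n) m * S m - b n * prod_before T (route n) m * T m))
          + b n * ln_defect (a n / b n))"
  proof (rule sum_mono)
    fix n assume n: "n \<in> {1..N}"
    have "\<forall>j\<in>set (route n). 0 < S j \<and> 0 < T j \<and> T j \<le> 1"
      using route_subset[OF n] S_bounds T_bounds by blast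
    then show "(\<Sum>m\<in>set (route n). a n * prod_before S (route n) m * S m * ln_defect (T m / S m))
     \<le> (\<Sum>m\<in>set (route n). ln (S m / T m)
            * (a n * prod_before S (route n) m * S m - b n * prod_before T (route n) m * T m))
          + b n * ln_defect (a n / b n)"
      using n distinct_route a_pos b_pos by (intro route_entropy_inequality) auto
  qed
  also have "\<dots> = (\<Sum>m\<in>{1..M}. g m) + (\<Sum>n\<in>{1..N}. b n * ln_defect (a n / b n))"
    unfolding sum.distrib sum_routes_swap g_def load_def
    by (simp add: sum_distrib_left sum_subtractf algebra_simps)
  also have "(\<Sum>m\<in>{1..M}. g m) = (\<Sum>m\<in>A. g m) + (\<Sum>m\<in>{1..M} - A. g m)"
    using A by (metis add.commute finite_atLeastAtMost sum.subset_diff)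
  also have "(\<Sum>m\<in>A. g m) \<le> 0"
    unfolding g_def using saturated_node_sign[OF S T _ A] by (intro sum_nonpos) auto
  finally show ?thesis
    unfolding g_def by simp
qed

lemma pinned_node_term_le:
  assumes S: "pinned_solution A a \<sigma> S" "admissible A a \<sigma>"
    and T: "pinned_solution A b \<tau> T" "admissible A b \<tau>"
    and j: "j \<in> {1..M} - A"
  shows "ln (S j / T j) * (S j * load a S j - T j * load b T j)
      \<le> \<bar>ln (\<sigma> j / \<tau> j)\<bar> * ((\<Sum>n\<in>{1..N}. a n) + (\<Sum>n\<in>{1..N}. b n))"
proof -
  let ?l = "ln (S j / T j)" and ?d = "S j * load a S j - T j * load b T j"
  have j_node: "j \<in> {1..M}"
    using j by blast
  have "\<bar>?d\<bar> \<le> (\<Sum>n\<in>{1..N}. a n) + (\<Sum>n\<in>{1..N}. b n)"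
    using factor_load_bounds[OF S j_node] factor_load_bounds[OF T j_node] by linarith
  then have "?l * ?d \<le> \<bar>?l\<bar> * ((\<Sum>n\<in>{1..N}. a n) + (\<Sum>n\<in>{1..N}. b n))"
    using abs_ge_self[of "?l * ?d"] mult_left_mono[of "\<bar>?d\<bar>" _ "\<bar>?l\<bar>"]
    by (simp add: abs_mult) (meson order_trans)
  moreover have "S j = \<sigma> j" "T j = \<tau> j"
    using S(1) T(1) j by (auto simp: pinned_solution_def)
  ultimately show ?thesis
    by simp
qed

text \<open>The right-hand side of the entropy estimate, with the terms of the pinned
  nodes replaced by a bound that is continuous in the data.\<close>

definition deviation :: "nat set \<Rightarrow> (nat \<Rightarrow> real) \<Rightarrow> (nat \<Rightarrow> real) \<Rightarrow> (nat \<Rightarrow> real) \<Rightarrow> (nat \<Rightarrow> real) \<Rightarrow> real" where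
  "deviation A a \<sigma> b \<tau> = (\<Sum>n\<in>{1..N}. b n * ln_defect (a n / b n))
     + (\<Sum>j\<in>{1..M} - A. \<bar>ln (\<sigma> j / \<tau> j)\<bar> * ((\<Sum>n\<in>{1..N}. a n) + (\<Sum>n\<in>{1..N}. b n)))"

lemma deviation_self:
  assumes "admissible A a \<sigma>"
  shows "deviation A a \<sigma> a \<sigma> = 0"
proof -
  have "(\<Sum>n\<in>{1..N}. a n * ln_defect (a n / a n)) = 0"
    using admissible_weight_pos[OF assms] by (intro sum.neutral ballI) (simp add: less_imp_neq[symmetric])
  moreover have "(\<Sum>j\<in>{1..M} - A. \<bar>ln (\<sigma> j / \<sigma> j)\<bar> * ((\<Sum>n\<in>{1..N}. a n) + (\<Sum>n\<in>{1..N}. a n))) = 0"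
    using admissible_pin_bounds[OF assms] by (intro sum.neutral ballI) (simp add: less_imp_neq[symmetric])
  ultimately show ?thesis
    unfolding deviation_def by simp
qed

lemma deviation_tendsto_0:
  assumes "admissible A a0 \<sigma>0"
    and "\<forall>n\<in>{1..N}. ((\<lambda>x. a x n) \<longlongrightarrow> a0 n) F"
    and "\<forall>j\<in>{1..M} - A. ((\<lambda>x. \<sigma> x j) \<longlongrightarrow> \<sigma>0 j) F"
  shows "((\<lambda>x. deviation A (a x) (\<sigma> x) a0 \<sigma>0) \<longlongrightarrow> 0) F"
proof -
  have a0: "a0 n \<noteq> 0" if "n \<in> {1..N}" for n
    using admissible_weight_pos[OF assms(1) that] by simp
  have \<sigma>0: "\<sigma>0 j \<noteq> 0" if "j \<in> {1..M} - A" for j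
    using admissible_pin_bounds[OF assms(1) that] by simp
  have "((\<lambda>x. deviation A (a x) (\<sigma> x) a0 \<sigma>0) \<longlongrightarrow> deviation A a0 \<sigma>0 a0 \<sigma>0) F"
    using assms(2,3) unfolding deviation_def ln_defect_def
    by (intro tendsto_intros) (auto simp: a0 \<sigma>0)
  then show ?thesis
    using deviation_self[OF assms(1)] by simp
qed

lemma weighted_defect_le_deviation:
  assumes S: "pinned_solution A a \<sigma> S" "admissible A a \<sigma>"
    and T: "pinned_solution A b \<tau> T" "admissible A b \<tau>"
    and A: "A \<subseteq> {1..M}" and n: "n \<in> {1..N}" "m \<in> set (route n)"
  shows "a n * prod_before S (route n) m * S m * ln_defect (T m / S m) \<le> deviation A a \<sigma> b \<tau>"
proof -
  define w where "w n' j = a n' * prod_before S (route n') j * S j * ln_defect (T j / S j)" for n' j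
  have w_nonneg: "0 \<le> w n' j" if "n' \<in> {1..N}" "j \<in> set (route n')" for n' j
  proof -
    have "j \<in> {1..M}"
      using route_subset that by blast
    then have "0 < a n'" "0 < prod_before S (route n') j" "0 < S j" "0 < T j"
      using S(2) that prod_before_route_bounds[OF that(1) pinned_solution_bounds[OF S]]
        pinned_solution_bounds[OF S] pinned_solution_bounds[OF T]
      by (auto simp: admissible_def)
    then show ?thesis
      unfolding w_def by (simp add: ln_defect_nonneg)
  qed
  have "w n m \<le> (\<Sum>j\<in>set (route n). w n j)"
    using n w_nonneg by (intro member_le_sum) auto
  also have "\<dots> \<le> (\<Sum>n'\<in>{1..N}. \<Sum>j\<in>set (route n'). w n' j)"
    using n w_nonneg by (intro member_le_sum[where f = "\<lambda>n'. \<Sum>j\<in>set (route n'). w n' j"] sum_nonneg) auto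
  also have "\<dots> \<le> (\<Sum>n\<in>{1..N}. b n * ln_defect (a n / b n))
       + (\<Sum>j\<in>{1..M} - A. ln (S j / T j) * (S j * load a S j - T j * load b T j))"
    unfolding w_def by (rule entropy_estimate[OF S T A])
  also have "\<dots> \<le> deviation A a \<sigma> b \<tau>"
    unfolding deviation_def using pinned_node_term_le[OF S T] by (intro add_left_mono sum_mono) auto
  finally show ?thesis
    unfolding w_def .
qed

lemma pinned_solution_unique:
  assumes S: "pinned_solution A a \<sigma> S" "admissible A a \<sigma>" and T: "pinned_solution A a \<sigma> T"
    and A: "A \<subseteq> {1..M}" and m: "m \<in> {1..M}"
  shows "S m = T m"
proof (cases "classes_at N route m = {}")
  case True
  then show ?thesis
    using pinned_solution_no_classes[OF S(1) m] pinned_solution_no_classes[OF T m] by simp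
next
  case False
  then obtain n where n: "n \<in> {1..N}" "m \<in> set (route n)"
    unfolding classes_at_def by auto
  have S_bounds: "\<forall>j\<in>{1..M}. 0 < S j \<and> S j \<le> 1" and T_bounds: "\<forall>j\<in>{1..M}. 0 < T j \<and> T j \<le> 1"
    using pinned_solution_bounds S T by blast+
  have "0 < a n * prod_before S (route n) m * S m"
    using S(2) n prod_before_route_bounds[OF n(1) S_bounds] S_bounds m by (simp add: admissible_def)
  moreover have "a n * prod_before S (route n) m * S m * ln_defect (T m / S m) \<le> 0"
    using weighted_defect_le_deviation[OF S T S(2) A n] deviation_self[OF S(2)] by simp
  ultimately have "ln_defect (T m / S m) \<le> 0"
    by (meson mult_pos_pos not_le)
  then have "T m / S m = 1"
    using ln_defect_pos[of "T m / S m"] S_bounds T_bounds m by force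
  then show ?thesis
    using S_bounds m by simp
qed

text \<open>An a-priori lower bound for the factors, since every load is at most \<open>\<Sum>\<^sub>n a\<^sub>n\<close>.\<close>

definition factor_floor :: "nat set \<Rightarrow> (nat \<Rightarrow> real) \<Rightarrow> (nat \<Rightarrow> real) \<Rightarrow> nat \<Rightarrow> real" where
  "factor_floor A a \<sigma> j = (if j \<in> A then C j / max (C j) (\<Sum>n\<in>{1..N}. a n) else \<sigma> j)"

lemma factor_floor_pos:
  assumes "admissible A a \<sigma>" "j \<in> {1..M}"
  shows "factor_floor A a \<sigma> j > 0"
proof -
  have "C j > 0"
    using C_pos assms(2) by blast
  then show ?thesis
    using assms div_max_bounds admissible_pin_bounds[OF assms(1)]
    unfolding factor_floor_def by auto
qed

lemma factor_floor_le:
  assumes "pinned_solution A a \<sigma> S" "admissible A a \<sigma>" "j \<in> {1..M}"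
  shows "factor_floor A a \<sigma> j \<le> S j"
  using assms capacity_factor_mono pinned_load_bounds[OF assms(1,2)]
  unfolding factor_floor_def pinned_solution_def by auto

lemma factor_floor_tendsto:
  assumes "\<forall>n\<in>{1..N}. ((\<lambda>x. a x n) \<longlongrightarrow> a0 n) F"
    and "\<forall>j\<in>{1..M} - A. ((\<lambda>x. \<sigma> x j) \<longlongrightarrow> \<sigma>0 j) F" "j \<in> {1..M}"
  shows "((\<lambda>x. factor_floor A (a x) (\<sigma> x) j) \<longlongrightarrow> factor_floor A a0 \<sigma>0 j) F"
proof (cases "j \<in> A")
  case True
  have "C j > 0"
    using C_pos assms(3) by blast
  then have "((\<lambda>x. C j / max (C j) (\<Sum>n\<in>{1..N}. a x n)) \<longlongrightarrow> C j / max (C j) (\<Sum>n\<in>{1..N}. a0 n)) F"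
    using assms(1) by (intro tendsto_intros) (auto simp: max_def)
  then show ?thesis
    using True by (simp add: factor_floor_def)
qed (use assms in \<open>simp add: factor_floor_def\<close>)

definition floor_weight :: "nat set \<Rightarrow> (nat \<Rightarrow> real) \<Rightarrow> (nat \<Rightarrow> real) \<Rightarrow> nat \<Rightarrow> nat \<Rightarrow> real" where
  "floor_weight A a \<sigma> n m = a n * prod_before (factor_floor A a \<sigma>) (route n) m * factor_floor A a \<sigma> m"

lemma prod_before_floor_pos:
  assumes "admissible A a \<sigma>" "n \<in> {1..N}"
  shows "0 < prod_before (factor_floor A a \<sigma>) (route n) m"
  unfolding prod_before_def
  using factor_floor_pos[OF assms(1)] nodes_before_route_subset[OF assms(2)]
  by (intro prod_pos) blast

lemma floor_weight_pos:
  assumes "admissible A a \<sigma>" "n \<in> {1..N}" "m \<in> set (route n)"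
  shows "0 < floor_weight A a \<sigma> n m"
proof -
  have "m \<in> {1..M}"
    using route_subset assms(2,3) by blast
  then show ?thesis
    unfolding floor_weight_def
    using admissible_weight_pos[OF assms(1,2)] prod_before_floor_pos[OF assms(1,2)]
      factor_floor_pos[OF assms(1)] by simp
qed

lemma floor_weight_le:
  assumes "pinned_solution A a \<sigma> S" "admissible A a \<sigma>" "n \<in> {1..N}" "m \<in> set (route n)"
  shows "floor_weight A a \<sigma> n m \<le> a n * prod_before S (route n) m * S m"
proof -
  have m: "m \<in> {1..M}"
    using route_subset assms(3,4) by blast
  have "prod_before (factor_floor A a \<sigma>) (route n) m \<le> prod_before S (route n) m"
    unfolding prod_before_def
  proof (rule prod_mono)
    fix j assume "j \<in> nodes_before (route n) m"
    then have "j \<in> {1..M}"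
      using nodes_before_route_subset[OF assms(3)] by blast
    then show "0 \<le> factor_floor A a \<sigma> j \<and> factor_floor A a \<sigma> j \<le> S j"
      using factor_floor_pos[OF assms(2)] factor_floor_le[OF assms(1,2)] less_imp_le by blast
  qed
  moreover have "0 \<le> prod_before (factor_floor A a \<sigma>) (route n) m"
    using less_imp_le[OF prod_before_floor_pos[OF assms(2,3)]] .
  moreover have "0 < a n" "0 < factor_floor A a \<sigma> m" "factor_floor A a \<sigma> m \<le> S m"
    using admissible_weight_pos[OF assms(2,3)] factor_floor_pos[OF assms(2) m]
      factor_floor_le[OF assms(1,2) m] by auto
  ultimately show ?thesis
    unfolding floor_weight_def by (intro mult_mono mult_left_mono) auto
qed

lemma floor_weight_tendsto:
  assumes a: "\<forall>n\<in>{1..N}. ((\<lambda>x. a x n) \<longlongrightarrow> a0 n) F"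
    and \<sigma>: "\<forall>j\<in>{1..M} - A. ((\<lambda>x. \<sigma> x j) \<longlongrightarrow> \<sigma>0 j) F"
    and n: "n \<in> {1..N}" and m: "m \<in> {1..M}"
  shows "((\<lambda>x. floor_weight A (a x) (\<sigma> x) n m) \<longlongrightarrow> floor_weight A a0 \<sigma>0 n m) F"
proof -
  have "((\<lambda>x. prod_before (factor_floor A (a x) (\<sigma> x)) (route n) m)
      \<longlongrightarrow> prod_before (factor_floor A a0 \<sigma>0) (route n) m) F"
    unfolding prod_before_def
  proof (rule tendsto_prod)
    fix j assume "j \<in> nodes_before (route n) m"
    then have "j \<in> {1..M}"
      using nodes_before_route_subset[OF n] by blast
    then show "((\<lambda>x. factor_floor A (a x) (\<sigma> x) j) \<longlongrightarrow> factor_floor A a0 \<sigma>0 j) F"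
      by (rule factor_floor_tendsto[OF a \<sigma>])
  qed
  moreover have "((\<lambda>x. a x n) \<longlongrightarrow> a0 n) F"
    using a n by blast
  ultimately show ?thesis
    unfolding floor_weight_def by (intro tendsto_mult factor_floor_tendsto[OF a \<sigma> m])
qed

lemma ln_defect_le_deviation_div_floor_weight:
  assumes S: "pinned_solution A a \<sigma> S" "admissible A a \<sigma>"
    and T: "pinned_solution A b \<tau> T" "admissible A b \<tau>"
    and A: "A \<subseteq> {1..M}" and n: "n \<in> {1..N}" "m \<in> set (route n)"
  shows "ln_defect (T m / S m) \<le> deviation A a \<sigma> b \<tau> / floor_weight A a \<sigma> n m"
proof -
  have "m \<in> {1..M}"
    using route_subset n by blast
  then have H: "0 \<le> ln_defect (T m / S m)"
    using pinned_solution_bounds[OF S] pinned_solution_bounds[OF T] by (simp add: ln_defect_nonneg)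
  have "floor_weight A a \<sigma> n m * ln_defect (T m / S m) \<le> deviation A a \<sigma> b \<tau>"
    using mult_right_mono[OF floor_weight_le[OF S n] H] weighted_defect_le_deviation[OF S T A n]
    by linarith
  then show ?thesis
    using floor_weight_pos[OF S(2) n] by (simp add: pos_le_divide_eq mult.commute)
qed

text \<open>Along a route the defect \<open>H(T\<^sub>m / S\<^sub>m)\<close> is squeezed to \<open>0\<close>, because
  the weight in front of it in the entropy estimate stays away from \<open>0\<close>.\<close>

lemma pinned_solution_tendsto_on_route:
  assumes A: "A \<subseteq> {1..M}"
    and S: "eventually (\<lambda>x. pinned_solution A (a x) (\<sigma> x) (S x) \<and> admissible A (a x) (\<sigma> x)) F"
    and T: "pinned_solution A a0 \<sigma>0 T" "admissible A a0 \<sigma>0"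
    and a: "\<forall>n\<in>{1..N}. ((\<lambda>x. a x n) \<longlongrightarrow> a0 n) F"
    and \<sigma>: "\<forall>j\<in>{1..M} - A. ((\<lambda>x. \<sigma> x j) \<longlongrightarrow> \<sigma>0 j) F"
    and n: "n \<in> {1..N}" "m \<in> set (route n)"
  shows "((\<lambda>x. S x m) \<longlongrightarrow> T m) F"
proof -
  have m: "m \<in> {1..M}"
    using route_subset n by blast
  then have T_bounds: "0 < T m" "T m \<le> 1"
    using pinned_solution_bounds[OF T] by auto
  let ?bound = "\<lambda>x. deviation A (a x) (\<sigma> x) a0 \<sigma>0 / floor_weight A (a x) (\<sigma> x) n m"
  have bound_lim: "(?bound \<longlongrightarrow> 0) F"
    using tendsto_divide[OF deviation_tendsto_0[OF T(2) a \<sigma>] floor_weight_tendsto[OF a \<sigma> n(1) m]]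
      floor_weight_pos[OF T(2) n] by simp
  have bound: "eventually (\<lambda>x. 0 \<le> ln_defect (T m / S x m) \<and> ln_defect (T m / S x m) \<le> ?bound x) F"
    using S
  proof eventually_elim
    case (elim x)
    then show ?case
      using ln_defect_le_deviation_div_floor_weight[OF _ _ T A n] pinned_solution_bounds T_bounds m
      by (auto intro: ln_defect_nonneg)
  qed
  have "((\<lambda>x. ln_defect (T m / S x m)) \<longlongrightarrow> 0) F"
  proof (rule tendsto_sandwich[OF _ _ tendsto_const bound_lim])
    show "eventually (\<lambda>x. 0 \<le> ln_defect (T m / S x m)) F"
      using bound by (rule eventually_mono) simp
    show "eventually (\<lambda>x. ln_defect (T m / S x m) \<le> ?bound x) F"
      using bound by (rule eventually_mono) simp
  qed
  moreover have "eventually (\<lambda>x. T m / S x m > 0) F"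
    using S by eventually_elim (use pinned_solution_bounds T_bounds m in auto)
  ultimately have "((\<lambda>x. T m / (T m / S x m)) \<longlongrightarrow> T m / 1) F"
    by (intro tendsto_intros tendsto_1_if_ln_defect_tendsto_0) auto
  moreover have "eventually (\<lambda>x. T m / (T m / S x m) = S x m) F"
    using S by eventually_elim (use pinned_solution_bounds T_bounds m in auto)
  ultimately show ?thesis
    using tendsto_cong[of "\<lambda>x. T m / (T m / S x m)" "\<lambda>x. S x m" F "T m"] by simp
qed

lemma pinned_solution_tendsto:
  assumes A: "A \<subseteq> {1..M}"
    and S: "eventually (\<lambda>x. pinned_solution A (a x) (\<sigma> x) (S x) \<and> admissible A (a x) (\<sigma> x)) F"
    and T: "pinned_solution A a0 \<sigma>0 T" "admissible A a0 \<sigma>0"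
    and a: "\<forall>n\<in>{1..N}. ((\<lambda>x. a x n) \<longlongrightarrow> a0 n) F"
    and \<sigma>: "\<forall>j\<in>{1..M} - A. ((\<lambda>x. \<sigma> x j) \<longlongrightarrow> \<sigma>0 j) F"
    and m: "m \<in> {1..M}"
  shows "((\<lambda>x. S x m) \<longlongrightarrow> T m) F"
proof -
  consider "m \<notin> A" | "m \<in> A" "classes_at N route m = {}" | n where "n \<in> {1..N}" "m \<in> set (route n)"
    unfolding classes_at_def by blast
  then show ?thesis
  proof cases
    case 1
    have "eventually (\<lambda>x. \<sigma> x m = S x m) F"
      using S by eventually_elim (use 1 m in \<open>simp add: pinned_solution_def\<close>)
    moreover have "((\<lambda>x. \<sigma> x m) \<longlongrightarrow> \<sigma>0 m) F"
      using \<sigma> 1 m by blast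
    moreover have "T m = \<sigma>0 m"
      using T(1) 1 m by (simp add: pinned_solution_def)
    ultimately show ?thesis
      using tendsto_cong by metis
  next
    case 2
    have "eventually (\<lambda>x. T m = S x m) F"
      using S
    proof eventually_elim
      case (elim x)
      then show ?case
        using pinned_solution_no_classes[of A "a x" "\<sigma> x" "S x", OF _ m 2(2)]
          pinned_solution_no_classes[OF T(1) m 2(2)] 2(1) by simp
    qed
    then show ?thesis
      using tendsto_cong[of "\<lambda>x. T m" "\<lambda>x. S x m" F "T m"] by simp
  next
    case 3
    then show ?thesis
      by (rule pinned_solution_tendsto_on_route[OF A S T a \<sigma>])
  qed
qed

lemma capacity_factor_continuous_in_pin:
  assumes A: "A \<subseteq> {1..M}" and k: "k \<in> {1..M}"
    and Sol: "\<And>t. t \<in> I \<Longrightarrow> pinned_solution A a (\<sigma>(j := t)) (Sol t) \<and> admissible A a (\<sigma>(j := t))"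
  shows "continuous_on I (\<lambda>t. capacity_factor a (Sol t) k)"
  unfolding continuous_on_def
proof
  fix t0 assume t0: "t0 \<in> I"
  let ?F = "at t0 within I"
  have "eventually (\<lambda>t. t \<in> I) ?F"
    by (simp add: eventually_at_filter)
  then have ev: "eventually (\<lambda>t. pinned_solution A a (\<sigma>(j := t)) (Sol t) \<and> admissible A a (\<sigma>(j := t))) ?F"
    by eventually_elim (rule Sol)
  have pin_lim: "((\<lambda>t. (\<sigma>(j := t)) i) \<longlongrightarrow> (\<sigma>(j := t0)) i) ?F" for i
    by (cases "i = j") (simp_all add: tendsto_ident_at)
  have "((\<lambda>t. Sol t i) \<longlongrightarrow> Sol t0 i) ?F" if "i \<in> {1..M}" for i
    using Sol[OF t0] pin_lim
    by (intro pinned_solution_tendsto[OF A, where a = "\<lambda>_. a" and \<sigma> = "\<lambda>t. \<sigma>(j := t)",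
          OF ev conjunct1[OF Sol[OF t0]] conjunct2[OF Sol[OF t0]] _ _ that]) simp_all
  then have "\<forall>i\<in>{1..M}. ((\<lambda>t. Sol t i) \<longlongrightarrow> Sol t0 i) ?F"
    by blast
  then show "((\<lambda>t. capacity_factor a (Sol t) k) \<longlongrightarrow> capacity_factor a (Sol t0) k) ?F"
    using k by (rule capacity_factor_tendsto)
qed

text \<open>Adding a node \<open>k\<close> to \<open>A\<close>: pin it to \<open>t \<in> [lo, 1]\<close>, where \<open>lo\<close> is the
  factor floor, and find a \<open>t\<close> that reproduces itself as the factor of \<open>k\<close>.\<close>

lemma pinned_solution_insert:
  assumes A: "A \<subseteq> {1..M}" and k: "k \<in> {1..M}" "k \<notin> A"
    and adm: "admissible (insert k A) a \<sigma>"
    and solvable: "\<And>\<sigma>'. admissible A a \<sigma>' \<Longrightarrow> \<exists>S. pinned_solution A a \<sigma>' S"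
  shows "\<exists>S. pinned_solution (insert k A) a \<sigma> S"
proof -
  define lo where "lo = C k / max (C k) (\<Sum>n\<in>{1..N}. a n)"
  have "C k > 0"
    using C_pos k by blast
  then have lo: "0 < lo" "lo \<le> 1"
    using div_max_bounds unfolding lo_def by auto
  have pinned_admissible: "admissible A a (\<sigma>(k := t))" if "t \<in> {lo..1}" for t
    using adm lo that unfolding admissible_def by auto
  define Sol where "Sol t = (SOME S. pinned_solution A a (\<sigma>(k := t)) S)" for t
  have Sol: "pinned_solution A a (\<sigma>(k := t)) (Sol t) \<and> admissible A a (\<sigma>(k := t))"
    if "t \<in> {lo..1}" for t
    unfolding Sol_def
    using someI_ex[OF solvable[OF pinned_admissible[OF that]]] pinned_admissible[OF that] by blast
  define g where "g t = capacity_factor a (Sol t) k - t" for t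
  have "continuous_on {lo..1} g"
    unfolding g_def
    by (intro continuous_intros capacity_factor_continuous_in_pin[OF A k(1) Sol])
  moreover have "g 1 \<le> 0"
    unfolding g_def using capacity_factor_bounds[OF k(1)] by simp
  moreover have "0 \<le> g lo"
    using Sol[of lo] lo capacity_factor_mono[OF k(1)] pinned_load_bounds
    unfolding g_def lo_def by fastforce
  ultimately obtain t where t: "lo \<le> t" "t \<le> 1" "g t = 0"
    using IVT2'[of g 1 0 lo] lo by auto
  have "pinned_solution (insert k A) a \<sigma> (Sol t)"
    using conjunct1[OF Sol[of t]] t k(2)
    unfolding pinned_solution_def g_def by auto
  then show ?thesis
    by blast
qed

lemma pinned_solution_exists:
  assumes "finite A" "A \<subseteq> {1..M}" "admissible A a \<sigma>"
  shows "\<exists>S. pinned_solution A a \<sigma> S"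
  using assms
proof (induction A arbitrary: \<sigma> rule: finite_induct)
  case empty
  then show ?case
    by (auto simp: pinned_solution_def)
next
  case (insert k A)
  then show ?case
    by (intro pinned_solution_insert) auto
qed

section \<open>The rate equations\<close>

definition class_weight :: "(nat \<Rightarrow> nat) \<Rightarrow> (nat \<Rightarrow> real) \<Rightarrow> (nat \<Rightarrow> real) \<Rightarrow> nat \<Rightarrow> real" where
  "class_weight J r \<rho> n = real (J n) * r n + \<rho> n"

text \<open>The solution of the recursion in \<^const>\<open>is_solution\<close> for given node factors \<open>S\<close>.\<close>

definition route_rates :: "(nat \<Rightarrow> real) \<Rightarrow> (nat \<Rightarrow> real) \<Rightarrow> nat \<Rightarrow> nat \<Rightarrow> real" where
  "route_rates S x n m =
     (if n \<in> {1..N} \<and> m \<in> {1..M} \<and> m \<in> set (route n) then x n * prod_before S (route n) m else 0)"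

lemma route_rates_cong:
  assumes "\<forall>j\<in>{1..M}. S j = S' j"
  shows "route_rates S x = route_rates S' x"
proof (intro ext)
  fix n m
  have "prod_before S (route n) m = prod_before S' (route n) m" if "n \<in> {1..N}"
    unfolding prod_before_def using nodes_before_route_subset[OF that] assms
    by (intro prod.cong) auto
  then show "route_rates S x n m = route_rates S' x n m"
    unfolding route_rates_def by simp
qed

lemma admissible_class_weight:
  assumes "\<forall>n\<in>{1..N}. r n > 0 \<and> \<rho> n > 0"
  shows "admissible {1..M} (class_weight J r \<rho>) \<sigma>"
  using assms unfolding admissible_def class_weight_def
  by (auto intro!: add_nonneg_pos mult_nonneg_nonneg simp: less_imp_le)

lemma S_fac_route_rates:
  "S_fac N route C J (route_rates S r) (route_rates S \<rho>) m = capacity_factor (class_weight J r \<rho>) S m"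
proof -
  have "(\<Sum>n\<in>classes_at N route m. real (J n) * route_rates S r n m + route_rates S \<rho> n m)
      = load (class_weight J r \<rho>) S m"
    unfolding load_def
  proof (rule sum.cong[OF refl])
    fix n assume "n \<in> classes_at N route m"
    then have "n \<in> {1..N}" "m \<in> set (route n)"
      unfolding classes_at_def by auto
    moreover from this have "m \<in> {1..M}"
      using route_subset by blast
    ultimately
    show "real (J n) * route_rates S r n m + route_rates S \<rho> n m
        = class_weight J r \<rho> n * prod_before S (route n) m"
      unfolding route_rates_def class_weight_def by (simp add: algebra_simps)
  qed
  then show ?thesis
    unfolding S_fac_def capacity_factor_def by simp
qed

lemma route_rates_recursion:
  assumes n: "n \<in> {1..N}" and m: "m \<in> {1..M}"
  shows "route_rates S x n m =
    (if n \<notin> classes_at N route m then 0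
     else if pred_node route n m = 0 then x n
     else route_rates S x n (pred_node route n m) * S (pred_node route n m))"
proof (cases "m \<in> set (route n)")
  case False
  then show ?thesis
    unfolding route_rates_def classes_at_def by simp
next
  case True
  then obtain i where i: "i < length (route n)" "route n ! i = m"
    by (metis in_set_conv_nth)
  have d: "distinct (route n)"
    using distinct_route n by blast
  have cl: "n \<in> classes_at N route m"
    using n True unfolding classes_at_def by simp
  show ?thesis
  proof (cases i)
    case 0
    then show ?thesis
      using pred_node_nth[of route n, OF d i(1)] prod_before_nth_0[OF d, of S] i cl n m True
      unfolding route_rates_def by auto
  next
    case (Suc i')
    define p where "p = route n ! i'"
    have p: "pred_node route n m = p" "p \<in> set (route n)"
      using pred_node_nth[of route n, OF d i(1)] i Suc unfolding p_def by auto
    then have "p \<in> {1..M}"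
      using route_subset[OF n] by blast
    moreover have "prod_before S (route n) m = prod_before S (route n) p * S p"
      using prod_before_nth_Suc[OF d, of i' S] i Suc unfolding p_def by simp
    ultimately show ?thesis
      using cl n m True p unfolding route_rates_def by auto
  qed
qed

lemma eq_route_rates_on_route:
  assumes n: "n \<in> {1..N}" and i: "i < length (route n)"
    and rec: "\<forall>m\<in>{1..M}. X n m =
      (if n \<notin> classes_at N route m then 0
       else if pred_node route n m = 0 then x n
       else X n (pred_node route n m) * S (pred_node route n m))"
  shows "X n (route n ! i) = route_rates S x n (route n ! i)"
  using i
proof (induction i)
  case 0
  then have "route n ! 0 \<in> set (route n)"
    by simp
  then have "route n ! 0 \<in> {1..M}" "n \<in> classes_at N route (route n ! 0)"
    using route_subset[OF n] n unfolding classes_at_def by auto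
  moreover have "pred_node route n (route n ! 0) = 0"
    using pred_node_nth[of route n 0] distinct_route[OF n] 0 by simp
  ultimately show ?case
    using rec route_rates_recursion[OF n] by auto
next
  case (Suc i)
  have "route n ! Suc i \<in> set (route n)" "route n ! i \<in> set (route n)"
    using Suc.prems by auto
  then have "route n ! Suc i \<in> {1..M}" "n \<in> classes_at N route (route n ! Suc i)" "route n ! i \<noteq> 0"
    using route_subset[OF n] n unfolding classes_at_def by auto
  moreover have "pred_node route n (route n ! Suc i) = route n ! i"
    using pred_node_nth[of route n, OF distinct_route[OF n] Suc.prems] by simp
  ultimately show ?case
    using rec route_rates_recursion[OF n] Suc by auto
qed

lemma eq_route_rates_if_recursion:
  assumes zero: "\<forall>n m. (n \<notin> {1..N} \<or> m \<notin> {1..M}) \<longrightarrow> X n m = 0"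
    and rec: "\<forall>n\<in>{1..N}. \<forall>m\<in>{1..M}. X n m =
      (if n \<notin> classes_at N route m then 0
       else if pred_node route n m = 0 then x n
       else X n (pred_node route n m) * S (pred_node route n m))"
  shows "X = route_rates S x"
proof (intro ext)
  fix n m
  consider "n \<notin> {1..N} \<or> m \<notin> {1..M}" | "n \<in> {1..N}" "m \<in> {1..M}" "m \<notin> set (route n)"
    | i where "n \<in> {1..N}" "i < length (route n)" "m = route n ! i"
    by (metis in_set_conv_nth)
  then show "X n m = route_rates S x n m"
  proof cases
    case 1
    then show ?thesis
      using zero unfolding route_rates_def by auto
  next
    case 2
    then show ?thesis
      using rec unfolding route_rates_def classes_at_def by auto
  next
    case 3
    then show ?thesis
      using eq_route_rates_on_route[of n i X x S] rec by blast
  qed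
qed

lemma is_solution_imp_route_rates:
  assumes "is_solution M N route C r \<rho> J (R, P)"
  defines "S \<equiv> S_fac N route C J R P"
  shows "R = route_rates S r \<and> P = route_rates S \<rho> \<and> pinned_solution {1..M} (class_weight J r \<rho>) \<sigma> S"
proof -
  have eqs: "(\<forall>n m. (n \<notin> {1..N} \<or> m \<notin> {1..M}) \<longrightarrow> R n m = 0 \<and> P n m = 0) \<and>
      (\<forall>n\<in>{1..N}. \<forall>m\<in>{1..M}.
         R n m = (if n \<notin> classes_at N route m then 0
                  else if pred_node route n m = 0 then r n
                  else R n (pred_node route n m) * S (pred_node route n m)) \<and>
         P n m = (if n \<notin> classes_at N route m then 0
                  else if pred_node route n m = 0 then \<rho> n
                  else P n (pred_node route n m) * S (pred_node route n m)))"
    using assms(1) unfolding is_solution_def Let_def S_def by simp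
  have R: "R = route_rates S r" and P: "P = route_rates S \<rho>"
    by (rule eq_route_rates_if_recursion; use eqs in blast)+
  have "S = S_fac N route C J R P"
    unfolding S_def ..
  also have "\<dots> = S_fac N route C J (route_rates S r) (route_rates S \<rho>)"
    using R P by simp
  finally have "S m = capacity_factor (class_weight J r \<rho>) S m" for m
    using S_fac_route_rates by metis
  then have "pinned_solution {1..M} (class_weight J r \<rho>) \<sigma> S"
    unfolding pinned_solution_def by simp
  then show ?thesis
    using R P by blast
qed

lemma route_rates_is_solution:
  assumes "pinned_solution {1..M} (class_weight J r \<rho>) \<sigma> S"
  shows "is_solution M N route C r \<rho> J (route_rates S r, route_rates S \<rho>)"
proof -
  have "S_fac N route C J (route_rates S r) (route_rates S \<rho>) j = S j" if "j \<in> {1..M}" for j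
    using assms that unfolding S_fac_route_rates pinned_solution_def by simp
  then show ?thesis
    unfolding is_solution_def Let_def fst_conv snd_conv
    using route_rates_recursion by (auto simp: route_rates_def)
qed

lemma is_solution_iff:
  assumes "\<forall>n\<in>{1..N}. r n > 0 \<and> \<rho> n > 0"
    and S: "pinned_solution {1..M} (class_weight J r \<rho>) \<sigma> S"
  shows "is_solution M N route C r \<rho> J sol \<longleftrightarrow> sol = (route_rates S r, route_rates S \<rho>)"
proof
  assume sol: "is_solution M N route C r \<rho> J sol"
  obtain R P where RP: "sol = (R, P)"
    by fastforce
  let ?S = "S_fac N route C J R P"
  have RP_eq: "R = route_rates ?S r" "P = route_rates ?S \<rho>"
    and pinned: "pinned_solution {1..M} (class_weight J r \<rho>) \<sigma> ?S"
    using is_solution_imp_route_rates[of r \<rho> J R P] sol RP by auto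
  have "\<forall>j\<in>{1..M}. ?S j = S j"
    using pinned_solution_unique[OF pinned admissible_class_weight[OF assms(1)] S] by blast
  then show "sol = (route_rates S r, route_rates S \<rho>)"
    using RP RP_eq route_rates_cong by metis
qed (use route_rates_is_solution[OF S] in simp)

lemma ex1_solution:
  assumes "\<forall>n\<in>{1..N}. r n > 0 \<and> \<rho> n > 0"
  shows "\<exists>!sol. is_solution M N route C r \<rho> J sol"
proof -
  obtain S where "pinned_solution {1..M} (class_weight J r \<rho>) (\<lambda>_. 1) S"
    using pinned_solution_exists admissible_class_weight[OF assms] by blast
  then show ?thesis
    using is_solution_iff[OF assms] by (metis (no_types))
qed

definition positive_rates :: "((nat \<Rightarrow> real) \<times> (nat \<Rightarrow> real)) set" where
  "positive_rates = {(r, \<rho>). \<forall>n\<in>{1..N}. r n > 0 \<and> \<rho> n > 0}"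

definition solution_factors :: "(nat \<Rightarrow> nat) \<Rightarrow> (nat \<Rightarrow> real) \<times> (nat \<Rightarrow> real) \<Rightarrow> nat \<Rightarrow> real" where
  "solution_factors J p = (SOME S. pinned_solution {1..M} (class_weight J (fst p) (snd p)) (\<lambda>_. 1) S)"

lemma solution_factors_pinned:
  assumes "p \<in> positive_rates"
  shows "pinned_solution {1..M} (class_weight J (fst p) (snd p)) (\<lambda>_. 1) (solution_factors J p)"
    and "admissible {1..M} (class_weight J (fst p) (snd p)) (\<lambda>_. 1)"
proof -
  show adm: "admissible {1..M} (class_weight J (fst p) (snd p)) (\<lambda>_. 1)"
    using assms admissible_class_weight unfolding positive_rates_def by auto
  show "pinned_solution {1..M} (class_weight J (fst p) (snd p)) (\<lambda>_. 1) (solution_factors J p)"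
    unfolding solution_factors_def using someI_ex[OF pinned_solution_exists[OF _ _ adm]] by simp
qed

lemma the_solution_eq:
  assumes "p \<in> positive_rates"
  shows "(THE sol. is_solution M N route C (fst p) (snd p) J sol)
       = (route_rates (solution_factors J p) (fst p), route_rates (solution_factors J p) (snd p))"
  using is_solution_iff[OF _ solution_factors_pinned(1)[OF assms]] assms
  unfolding positive_rates_def by auto

lemma continuous_on_route_rates:
  assumes "continuous_on positive_rates (\<lambda>p. x p n)"
  shows "continuous_on positive_rates (\<lambda>p. route_rates (solution_factors J p) (x p) n m)"
proof (cases "n \<in> {1..N} \<and> m \<in> {1..M} \<and> m \<in> set (route n)")
  case False
  then have "route_rates (solution_factors J p) (x p) n m = 0" for p
    unfolding route_rates_def by auto
  then show ?thesis
    by simp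
next
  case True
  show ?thesis
    unfolding continuous_on_def
  proof
    fix p0 assume p0: "p0 \<in> positive_rates"
    let ?F = "at p0 within positive_rates"
    have "eventually (\<lambda>p. p \<in> positive_rates) ?F"
      by (simp add: eventually_at_filter)
    then have ev: "eventually (\<lambda>p. pinned_solution {1..M} (class_weight J (fst p) (snd p)) (\<lambda>_. 1) (solution_factors J p)
        \<and> admissible {1..M} (class_weight J (fst p) (snd p)) (\<lambda>_. 1)) ?F"
      by eventually_elim (use solution_factors_pinned in blast)
    have "((\<lambda>p. fst p i) \<longlongrightarrow> fst p0 i) ?F" "((\<lambda>p. snd p i) \<longlongrightarrow> snd p0 i) ?F" for i
      by (rule tendsto_apply[OF tendsto_fst[OF tendsto_ident_at]] tendsto_apply[OF tendsto_snd[OF tendsto_ident_at]])+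
    then have "((\<lambda>p. solution_factors J p j) \<longlongrightarrow> solution_factors J p0 j) ?F" if "j \<in> {1..M}" for j
      using that solution_factors_pinned[OF p0]
      by (intro pinned_solution_tendsto[OF _ ev]) (auto simp: class_weight_def intro!: tendsto_intros)
    then have "((\<lambda>p. prod_before (solution_factors J p) (route n) m)
        \<longlongrightarrow> prod_before (solution_factors J p0) (route n) m) ?F"
      unfolding prod_before_def using nodes_before_route_subset True
      by (intro tendsto_prod) blast
    moreover have "((\<lambda>p. x p n) \<longlongrightarrow> x p0 n) ?F"
      using assms p0 unfolding continuous_on_def by blast
    ultimately show "((\<lambda>p. route_rates (solution_factors J p) (x p) n m)
        \<longlongrightarrow> route_rates (solution_factors J p0) (x p0) n m) ?F"
      using True unfolding route_rates_def by (simp add: tendsto_mult)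
  qed
qed

lemma continuous_on_the_solution:
  "continuous_on positive_rates (\<lambda>(r, \<rho>). fst (THE sol. is_solution M N route C r \<rho> J sol) n m)
 \<and> continuous_on positive_rates (\<lambda>(r, \<rho>). snd (THE sol. is_solution M N route C r \<rho> J sol) n m)"
proof
  have "continuous_on positive_rates (\<lambda>p. route_rates (solution_factors J p) (fst p) n m)"
    by (rule continuous_on_route_rates)
      (rule continuous_on_product_then_coordinatewise[OF continuous_on_fst[OF continuous_on_id]])
  then show "continuous_on positive_rates (\<lambda>(r, \<rho>). fst (THE sol. is_solution M N route C r \<rho> J sol) n m)"
    by (rule continuous_on_eq) (simp add: the_solution_eq split_beta)
  have "continuous_on positive_rates (\<lambda>p. route_rates (solution_factors J p) (snd p) n m)"
    by (rule continuous_on_route_rates)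
      (rule continuous_on_product_then_coordinatewise[OF continuous_on_snd[OF continuous_on_id]])
  then show "continuous_on positive_rates (\<lambda>(r, \<rho>). snd (THE sol. is_solution M N route C r \<rho> J sol) n m)"
    by (rule continuous_on_eq) (simp add: the_solution_eq split_beta)
qed

end

theorem mainTheorem2:
  fixes M N :: nat and route :: "nat \<Rightarrow> nat list" and C :: "nat \<Rightarrow> real"
    and J :: "nat \<Rightarrow> nat"
  assumes C_pos: "\<forall>m\<in>{1..M}. C m > 0"
    and routes: "\<forall>n\<in>{1..N}. route n \<noteq> [] \<and> distinct (route n) \<and> set (route n) \<subseteq> {1..M}"
  shows "(\<forall>r \<rho>. (\<forall>n\<in>{1..N}. r n > 0 \<and> \<rho> n > 0) \<longrightarrow>
            (\<exists>!sol. is_solution M N route C r \<rho> J sol))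
       \<and> (\<forall>n m. continuous_on {(r, \<rho>). \<forall>n\<in>{1..N}. r n > 0 \<and> \<rho> n > 0}
             (\<lambda>(r, \<rho>). fst (THE sol. is_solution M N route C r \<rho> J sol) n m)
           \<and> continuous_on {(r, \<rho>). \<forall>n\<in>{1..N}. r n > 0 \<and> \<rho> n > 0}
             (\<lambda>(r, \<rho>). snd (THE sol. is_solution M N route C r \<rho> J sol) n m))"
proof -
  interpret network M N route C
    using assms by unfold_locales
  show ?thesis
    using ex1_solution continuous_on_the_solution unfolding positive_rates_def by blast
qed

end
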